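(* Let $E=\tfrac12(\mathbb 1+\vec e\cdot\vec\sigma)$ be an unbiased qubit effect with $\|\vec e\|<1$, and let $B=\tfrac12(b^0\mathbb 1+\vec b\cdot\vec\sigma)$ be any qubit effect. If the two-outcome POVMs $(E,\mathbb 1-E)$ and $(B,\mathbb 1-B)$ are jointly measurable, then $$\|\vec e\|^2+\|\vec b\|^2-(\vec e\cdot\vec b)^2\le 1,$$ equivalently $\|\vec e+\vec b\|+\|\vec e-\vec b\|\le 2$. Conversely, if $B$ is also unbiased ($b^0=1$) and $\|\vec e\|^2+\|\vec b\|^2\le 1+(\vec e\cdot\vec b)^2$, then $(E,\mathbb 1-E)$ and $(B,\mathbb 1-B)$ are jointly measurable.
   Context: $\vec\sigma=(\sigma_1,\sigma_2,\sigma_3)$ are the Pauli matrices, $\sigma_1=\begin{pmatrix}0&1\\1&0\end{pmatrix}$, $\sigma_2=\begin{pmatrix}0&-i\\i&0\end{pmatrix}$, $\sigma_3=\begin{pmatrix}1&0\\0&-1\end{pmatrix}$. A qubit effect is a $2\times 2$ matrix $E$ with $0\le E\le\mathbb 1$; every effect can be written $E=\tfrac12(e^0\mathbb 1+\vec e\cdot\vec\sigma)$ with $(e^0,\vec e)\in\mathbb R^4$, $\|\vec e\|\le\min\{e^0,2-e^0\}$; it is unbiased if $e^0=1$. Joint measurability of two POVMs $(E_i)$, $(B_j)$: existence of a POVM $(N_{ij})$ with $\sum_jN_{ij}=E_i$, $\sum_iN_{ij}=B_j$. *)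

theory Defs
  imports "HOL-Analysis.Analysis"
begin

type_synonym qmat = "complex ^ 2 ^ 2"

definition sigma1 :: qmat where
  "sigma1 = (\<chi> i j. if i = j then 0 else 1)"
definition sigma2 :: qmat where
  "sigma2 = (\<chi> i j. if i = j then 0 else if i = 1 then - \<i> else \<i>)"
definition sigma3 :: qmat where
  "sigma3 = (\<chi> i j. if i \<noteq> j then 0 else if i = 1 then 1 else -1)"

definition bloch :: "real \<Rightarrow> real ^ 3 \<Rightarrow> qmat" where
  "bloch a0 a = (1/2) *\<^sub>R (a0 *\<^sub>R mat 1 + (a $ 1) *\<^sub>R sigma1
                 + (a $ 2) *\<^sub>R sigma2 + (a $ 3) *\<^sub>R sigma3)"

definition psd :: "qmat \<Rightarrow> bool" where
  "psd A \<longleftrightarrow> (\<forall>x :: complex ^ 2.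
     let q = (\<Sum>i\<in>UNIV. cnj (x $ i) * (A *v x) $ i) in Im q = 0 \<and> Re q \<ge> 0)"

definition qubit_effect :: "qmat \<Rightarrow> bool" where
  "qubit_effect E \<longleftrightarrow> psd E \<and> psd (mat 1 - E)"

definition povm :: "('i::finite \<Rightarrow> qmat) \<Rightarrow> bool" where
  "povm M \<longleftrightarrow> (\<forall>i. psd (M i)) \<and> (\<Sum>i\<in>UNIV. M i) = mat 1"

definition jointly_measurable ::
    "('i::finite \<Rightarrow> qmat) \<Rightarrow> ('j::finite \<Rightarrow> qmat) \<Rightarrow> bool" where
  "jointly_measurable M K \<longleftrightarrow> (\<exists>N :: 'i \<times> 'j \<Rightarrow> qmat. povm N \<and>
      (\<forall>i. (\<Sum>j\<in>UNIV. N (i, j)) = M i) \<and> (\<forall>j. (\<Sum>i\<in>UNIV. N (i, j)) = K j))"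

definition two_outcome :: "qmat \<Rightarrow> bool \<Rightarrow> qmat" where
  "two_outcome E = (\<lambda>b. if b then E else mat 1 - E)"

end

theory Submission
  imports Defs
begin

text \<open>A positive 2x2 matrix is exactly a Bloch form 1/2 (x I + m . sigma) with |m| <= x: its
  quadratic form at v is 1/2 (x |v|^2 + m . beta v), where the Bloch vector beta v of v has length
  |v|^2 and points in every direction as v varies. A joint observable of (E, I - E) and (B, I - B)
  therefore consists of four Bloch forms (x_ij, m_ij) with total weight 2, and its marginals give
  e + b = m_TT - m_FF and e - b = m_TF - m_FT, so the triangle inequality yields
  |e + b| + |e - b| <= 2. Conversely, for unbiased effects the forms with weights |e + b|/2 on the
  diagonal and vectors (+-e +- b)/2 are positive exactly under this inequality. Finally, with
  A = |e + b|, C = |e - b| and s = |e|^2 + |b|^2 one has A^2 + C^2 = 2 s and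
  A^2 C^2 = s^2 - 4 (e . b)^2, so A + C <= 2 is equivalent to s - (e . b)^2 <= 1 once s <= 2.\<close>

definition qform :: "qmat \<Rightarrow> complex ^ 2 \<Rightarrow> complex" where
  "qform A v = (\<Sum>i\<in>UNIV. cnj (v $ i) * (A *v v) $ i)"

lemma psd_iff_qform: "psd A \<longleftrightarrow> (\<forall>v. Im (qform A v) = 0 \<and> Re (qform A v) \<ge> 0)"
  by (simp add: psd_def qform_def Let_def)

lemma qform_2x2:
  "qform A v = cnj (v$1) * (A$1$1 * v$1 + A$1$2 * v$2) + cnj (v$2) * (A$2$1 * v$1 + A$2$2 * v$2)"
  by (simp add: qform_def matrix_vector_mult_def sum_2)

lemma bloch_index:
  "bloch x m $1$1 = complex_of_real ((x + m$3) / 2)"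
  "bloch x m $1$2 = Complex (m$1 / 2) (- m$2 / 2)"
  "bloch x m $2$1 = Complex (m$1 / 2) (m$2 / 2)"
  "bloch x m $2$2 = complex_of_real ((x - m$3) / 2)"
  by (auto simp: bloch_def sigma1_def sigma2_def sigma3_def mat_def complex_eq_iff)

lemma qmat_eq_iff:
  "(A :: qmat) = B \<longleftrightarrow> A$1$1 = B$1$1 \<and> A$1$2 = B$1$2 \<and> A$2$1 = B$2$1 \<and> A$2$2 = B$2$2"
  by (auto simp: vec_eq_iff forall_2)

lemma bloch_add: "bloch x m + bloch y n = bloch (x + y) (m + n)"
  by (simp add: qmat_eq_iff bloch_index complex_eq_iff field_simps)

lemma bloch_diff: "bloch x m - bloch y n = bloch (x - y) (m - n)"
  by (simp add: qmat_eq_iff bloch_index complex_eq_iff field_simps)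

lemma mat_1_eq_bloch: "mat 1 = bloch 2 0"
  by (simp add: qmat_eq_iff bloch_index complex_eq_iff mat_def)

lemma bloch_eq_iff: "bloch x m = bloch y n \<longleftrightarrow> x = y \<and> m = n"
  by (auto simp: qmat_eq_iff bloch_index complex_eq_iff vec_eq_iff forall_3)

definition bloch_vector :: "complex ^ 2 \<Rightarrow> real ^ 3" where
  "bloch_vector v = vector [2 * Re (cnj (v$1) * v$2), 2 * Im (cnj (v$1) * v$2),
                            (cmod (v$1))\<^sup>2 - (cmod (v$2))\<^sup>2]"

lemma norm_vec2_squared: "(norm (v :: 'a::real_inner ^ 2))\<^sup>2 = (norm (v$1))\<^sup>2 + (norm (v$2))\<^sup>2"
  by (simp add: power2_norm_eq_inner inner_vec_def sum_2)

lemma norm_vec3_squared: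
  "(norm (u :: 'a::real_inner ^ 3))\<^sup>2 = (norm (u$1))\<^sup>2 + (norm (u$2))\<^sup>2 + (norm (u$3))\<^sup>2"
  by (simp add: power2_norm_eq_inner inner_vec_def sum_3)

lemma qform_bloch:
  "qform (bloch x m) v = complex_of_real ((x * (norm v)\<^sup>2 + m \<bullet> bloch_vector v) / 2)"
  unfolding norm_vec2_squared bloch_vector_def cmod_power2
  by (simp add: qform_2x2 bloch_index inner_vec_def sum_3 complex_eq_iff power2_eq_square field_simps)

lemma norm_bloch_vector: "norm (bloch_vector v) = (norm v)\<^sup>2"
proof -
  have "(norm (bloch_vector v))\<^sup>2 = ((norm v)\<^sup>2)\<^sup>2"
    unfolding norm_vec3_squared norm_vec2_squared bloch_vector_def cmod_power2
    by (simp add: power2_eq_square algebra_simps)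
  then show ?thesis
    using power2_eq_iff_nonneg norm_ge_zero zero_le_power2 by blast
qed

lemma bloch_vector_ray:
  fixes u :: "real ^ 3"
  assumes "u \<noteq> 0"
  shows "\<exists>v c. c > 0 \<and> bloch_vector v = c *\<^sub>R u"
proof -
  define r where "r = norm u"
  have r2: "r\<^sup>2 = (u$1)\<^sup>2 + (u$2)\<^sup>2 + (u$3)\<^sup>2"
    unfolding r_def norm_vec3_squared by simp
  have "r > 0"
    using assms unfolding r_def by simp
  have "\<bar>u$3\<bar> \<le> r"
    unfolding r_def by (rule component_le_norm_cart)
  show ?thesis
  proof (cases "r + u$3 = 0")
    case True
    then have "u$3 = - r"
      by simp
    moreover from this have "(u$1)\<^sup>2 + (u$2)\<^sup>2 = 0"
      using r2 by simp
    ultimately have "bloch_vector (vector [0, 1]) = (1 / r) *\<^sub>R u"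
      using \<open>r > 0\<close> by (simp add: bloch_vector_def vec_eq_iff forall_3 sum_power2_eq_zero_iff)
    with \<open>r > 0\<close> show ?thesis
      by (intro exI[of _ "vector [0, 1]"] exI[of _ "1 / r"]) simp
  next
    case False
    with \<open>\<bar>u$3\<bar> \<le> r\<close> have "r + u$3 > 0"
      by linarith
    define v :: "complex ^ 2" where "v = vector [complex_of_real (r + u$3), Complex (u$1) (u$2)]"
    \<comment> \<open>Third coordinate: use \<open>(u$1)\<^sup>2 + (u$2)\<^sup>2 = (r - u$3) * (r + u$3)\<close>.\<close>
    have "bloch_vector v = (2 * (r + u$3)) *\<^sub>R u"
      unfolding bloch_vector_def v_def cmod_power2 using r2
      by (simp add: vec_eq_iff forall_3 power2_eq_square algebra_simps)
    with \<open>r + u$3 > 0\<close> show ?thesis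
      by (intro exI[of _ v] exI[of _ "2 * (r + u$3)"]) simp
  qed
qed

lemma psd_bloch_iff: "psd (bloch x m) \<longleftrightarrow> norm m \<le> x"
proof
  assume "psd (bloch x m)"
  then have form_nonneg: "0 \<le> x * (norm v)\<^sup>2 + m \<bullet> bloch_vector v" for v
    unfolding psd_iff_qform qform_bloch by simp
  show "norm m \<le> x"
  proof (cases "m = 0")
    case True
    then show ?thesis
      using form_nonneg[of "vector [1, 0]"] by (simp add: norm_vec2_squared)
  next
    case False
    then obtain v c where "c > 0" and ray: "bloch_vector v = c *\<^sub>R (- m)"
      using bloch_vector_ray[of "- m"] by auto
    have "(norm v)\<^sup>2 = c * norm m"
      using norm_bloch_vector[of v] \<open>c > 0\<close> by (simp add: ray)
    then have "0 \<le> (c * norm m) * (x - norm m)"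
      using form_nonneg[of v]
      by (simp add: ray power2_norm_eq_inner[symmetric] power2_eq_square algebra_simps)
    moreover have "c * norm m > 0"
      using \<open>c > 0\<close> False by simp
    ultimately show ?thesis
      by (simp add: zero_le_mult_iff)
  qed
next
  assume "norm m \<le> x"
  have "0 \<le> x * (norm v)\<^sup>2 + m \<bullet> bloch_vector v" for v
  proof -
    have "- (m \<bullet> bloch_vector v) \<le> norm m * (norm v)\<^sup>2"
      using norm_cauchy_schwarz[of "- m" "bloch_vector v"] by (simp add: norm_bloch_vector)
    also have "\<dots> \<le> x * (norm v)\<^sup>2"
      using \<open>norm m \<le> x\<close> by (simp add: mult_right_mono)
    finally show ?thesis by simp
  qed
  then show "psd (bloch x m)"
    unfolding psd_iff_qform qform_bloch by simp
qed

lemma psd_imp_bloch: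
  assumes "psd A"
  obtains x m where "A = bloch x m"
proof -
  have real_form: "Im (qform A v) = 0" for v
    using assms unfolding psd_iff_qform by blast
  have "Im (A$1$1) = 0" "Im (A$2$2) = 0" "Im (A$1$1 + A$1$2 + A$2$1 + A$2$2) = 0"
       "Re (A$1$2) = Re (A$2$1)"
    using real_form[of "vector [1, 0]"] real_form[of "vector [0, 1]"] real_form[of "vector [1, 1]"]
      real_form[of "vector [1, \<i>]"]
    by (simp_all add: qform_2x2)
  then have "A = bloch (Re (A$1$1) + Re (A$2$2))
                 (vector [2 * Re (A$2$1), 2 * Im (A$2$1), Re (A$1$1) - Re (A$2$2)])"
    by (simp add: qmat_eq_iff bloch_index complex_eq_iff field_simps)
  then show thesis ..
qed

lemma psd_iff_bloch: "psd A \<longleftrightarrow> (\<exists>x m. A = bloch x m \<and> norm m \<le> x)"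
  by (metis psd_imp_bloch psd_bloch_iff)

lemma jointly_measurableI:
  fixes N :: "'i::finite \<times> 'j::finite \<Rightarrow> qmat"
  assumes "\<And>ij. psd (N ij)" and "(\<Sum>i\<in>UNIV. M i) = mat 1"
    and "\<And>i. (\<Sum>j\<in>UNIV. N (i, j)) = M i" and "\<And>j. (\<Sum>i\<in>UNIV. N (i, j)) = K j"
  shows "jointly_measurable M K"
proof -
  have "(\<Sum>ij\<in>UNIV. N ij) = (\<Sum>i\<in>UNIV. \<Sum>j\<in>UNIV. N (i, j))"
    by (simp add: sum.cartesian_product)
  also have "\<dots> = mat 1"
    by (simp add: assms(2,3))
  finally show ?thesis
    using assms unfolding jointly_measurable_def povm_def by blast
qed

lemma jointly_measurable_two_outcome_bloch_imp:
  assumes "jointly_measurable (two_outcome (bloch e0 e)) (two_outcome (bloch b0 b))"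
  shows "norm (e + b) + norm (e - b) \<le> 2"
proof -
  obtain N :: "bool \<times> bool \<Rightarrow> qmat" where "povm N"
    and row: "\<And>i. (\<Sum>j\<in>UNIV. N (i, j)) = two_outcome (bloch e0 e) i"
    and col: "\<And>j. (\<Sum>i\<in>UNIV. N (i, j)) = two_outcome (bloch b0 b) j"
    using assms unfolding jointly_measurable_def by blast
  have "\<forall>ij. \<exists>x m. N ij = bloch x m \<and> norm m \<le> x"
    using \<open>povm N\<close> unfolding povm_def psd_iff_bloch by blast
  then obtain X M where N: "\<And>ij. N ij = bloch (X ij) (M ij)"
    and bound: "\<And>ij. norm (M ij) \<le> X ij"
    by metis
  have X_row_True: "X (True, False) + X (True, True) = e0"
    and M_row_True: "M (True, False) + M (True, True) = e"
    using row[of True] by (simp_all add: UNIV_bool N bloch_add bloch_eq_iff two_outcome_def)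
  have X_row_False: "X (False, False) + X (False, True) = 2 - e0"
    and M_row_False: "M (False, False) + M (False, True) = - e"
    using row[of False]
    by (simp_all add: UNIV_bool N bloch_add bloch_diff mat_1_eq_bloch bloch_eq_iff two_outcome_def)
  have M_col_True: "M (False, True) + M (True, True) = b"
    using col[of True] by (simp add: UNIV_bool N bloch_add bloch_eq_iff two_outcome_def)
  have M_False_False: "M (False, False) = - e - M (False, True)"
    using M_row_False by (metis add_diff_cancel_right')
  have "e + b = M (True, True) - M (False, False)"
    unfolding M_False_False M_row_True[symmetric] M_col_True[symmetric]
    by (simp add: algebra_simps)
  then have "norm (e + b) \<le> X (True, True) + X (False, False)"
    using order_trans[OF norm_triangle_ineq4 add_mono[OF bound bound]] by simp
  moreover have "e - b = M (True, False) - M (False, True)"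
    unfolding M_row_True[symmetric] M_col_True[symmetric] by (simp add: algebra_simps)
  then have "norm (e - b) \<le> X (True, False) + X (False, True)"
    using order_trans[OF norm_triangle_ineq4 add_mono[OF bound bound]] by simp
  ultimately show ?thesis
    using X_row_True X_row_False by linarith
qed

lemma jointly_measurable_two_outcome_blochI:
  assumes "norm (e + b) + norm (e - b) \<le> 2"
  shows "jointly_measurable (two_outcome (bloch 1 e)) (two_outcome (bloch 1 b))"
proof -
  define x where "x = norm (e + b) / 2"
  define sign :: "bool \<Rightarrow> real" where "sign i = (if i then 1 else -1)" for i
  define N where "N = (\<lambda>(i, j). bloch (if i = j then x else 1 - x)
                                    ((1/2) *\<^sub>R (sign i *\<^sub>R e + sign j *\<^sub>R b)))"
  show ?thesis
  proof (rule jointly_measurableI)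
    fix ij
    show "psd (N ij)"
      using assms norm_minus_commute[of e b] norm_minus_cancel[of "e + b"]
      by (cases ij) (auto simp: N_def sign_def x_def psd_bloch_iff)
  next
    show "(\<Sum>i\<in>UNIV. two_outcome (bloch 1 e) i) = mat 1"
      by (simp add: UNIV_bool two_outcome_def)
  next
    fix i
    show "(\<Sum>j\<in>UNIV. N (i, j)) = two_outcome (bloch 1 e) i"
      by (auto simp: UNIV_bool N_def sign_def two_outcome_def bloch_add bloch_diff mat_1_eq_bloch
          bloch_eq_iff) (auto simp: vec_eq_iff field_simps)
  next
    fix j
    show "(\<Sum>i\<in>UNIV. N (i, j)) = two_outcome (bloch 1 b) j"
      by (auto simp: UNIV_bool N_def sign_def two_outcome_def bloch_add bloch_diff mat_1_eq_bloch
          bloch_eq_iff) (auto simp: vec_eq_iff field_simps)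
  qed
qed

lemma add_le_2_iff_of_squares:
  fixes A C s p :: real
  assumes "A \<ge> 0" "C \<ge> 0" "A\<^sup>2 = s + 2 * p" "C\<^sup>2 = s - 2 * p" "s \<le> 2"
  shows "A + C \<le> 2 \<longleftrightarrow> s - p\<^sup>2 \<le> 1"
proof -
  have "A + C \<le> 2 \<longleftrightarrow> (A + C)\<^sup>2 \<le> 2\<^sup>2"
    using assms power_mono_iff[of "A + C" 2 2] by simp
  also have "\<dots> \<longleftrightarrow> A * C \<le> 2 - s"
    using assms by (simp add: power2_sum) linarith
  also have "\<dots> \<longleftrightarrow> (A * C)\<^sup>2 \<le> (2 - s)\<^sup>2"
    using assms by (simp add: power_mono_iff)
  also have "(A * C)\<^sup>2 = s\<^sup>2 - 4 * p\<^sup>2"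
    unfolding power_mult_distrib assms(3,4) by (simp add: power2_eq_square algebra_simps)
  finally show ?thesis
    by (simp add: power2_diff) linarith
qed

lemma norm_add_plus_norm_diff_le_2_iff:
  fixes e b :: "'a::real_inner"
  assumes "norm e < 1"
  shows "norm (e + b) + norm (e - b) \<le> 2 \<longleftrightarrow> (norm e)\<^sup>2 + (norm b)\<^sup>2 - (e \<bullet> b)\<^sup>2 \<le> 1"
    (is "?A + ?C \<le> 2 \<longleftrightarrow> ?s - ?p\<^sup>2 \<le> 1")
proof -
  have A: "?A\<^sup>2 = ?s + 2 * ?p" and C: "?C\<^sup>2 = ?s - 2 * ?p"
    by (simp_all add: power2_norm_eq_inner inner_add inner_diff inner_commute)
  have "?s \<le> 2" if "?A + ?C \<le> 2"
  proof -
    have "2 * ?s \<le> (?A + ?C)\<^sup>2"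
      using A C by (simp add: power2_sum)
    also have "\<dots> \<le> 2\<^sup>2"
      using that by (intro power_mono) auto
    finally show ?thesis by simp
  qed
  moreover have "?s \<le> 2" if "?s - ?p\<^sup>2 \<le> 1"
  proof -
    have "?p\<^sup>2 \<le> (norm e)\<^sup>2 * (norm b)\<^sup>2"
      using Cauchy_Schwarz_ineq[of e b] by (simp add: power2_norm_eq_inner)
    then have "(1 - (norm e)\<^sup>2) * (1 - (norm b)\<^sup>2) \<ge> 0"
      using that by (simp add: algebra_simps)
    moreover have "(norm e)\<^sup>2 < 1"
      using assms by (simp add: abs_square_less_1)
    ultimately have "(norm b)\<^sup>2 \<le> 1"
      by (simp add: zero_le_mult_iff)
    with \<open>(norm e)\<^sup>2 < 1\<close> show ?thesis by simp
  qed
  ultimately show ?thesis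
    using add_le_2_iff_of_squares[OF norm_ge_zero norm_ge_zero A C] by blast
qed

theorem mainTheorem3:
  fixes e b :: "real ^ 3" and b0 :: real
  assumes "norm e < 1"
    and "qubit_effect (bloch b0 b)"
  shows "(jointly_measurable (two_outcome (bloch 1 e)) (two_outcome (bloch b0 b)) \<longrightarrow>
            (norm e)\<^sup>2 + (norm b)\<^sup>2 - (e \<bullet> b)\<^sup>2 \<le> 1 \<and> norm (e + b) + norm (e - b) \<le> 2)
       \<and> (b0 = 1 \<and> (norm e)\<^sup>2 + (norm b)\<^sup>2 \<le> 1 + (e \<bullet> b)\<^sup>2 \<longrightarrow>
            jointly_measurable (two_outcome (bloch 1 e)) (two_outcome (bloch b0 b)))"
proof (intro conjI impI)
  assume "jointly_measurable (two_outcome (bloch 1 e)) (two_outcome (bloch b0 b))"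
  then show "norm (e + b) + norm (e - b) \<le> 2"
    by (rule jointly_measurable_two_outcome_bloch_imp)
  then show "(norm e)\<^sup>2 + (norm b)\<^sup>2 - (e \<bullet> b)\<^sup>2 \<le> 1"
    using norm_add_plus_norm_diff_le_2_iff[OF assms(1)] by simp
next
  assume "b0 = 1 \<and> (norm e)\<^sup>2 + (norm b)\<^sup>2 \<le> 1 + (e \<bullet> b)\<^sup>2"
  moreover from this have "norm (e + b) + norm (e - b) \<le> 2"
    using norm_add_plus_norm_diff_le_2_iff[OF assms(1)] by simp
  ultimately show "jointly_measurable (two_outcome (bloch 1 e)) (two_outcome (bloch b0 b))"
    using jointly_measurable_two_outcome_blochI by simp
qed

end
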